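(* In the Setting, suppose that $r=\sqrt{K-\lambda_1}$ and $s=-\sqrt{K-\lambda_1}$. Then \[ m=\frac{(-s)(n-1)}{n+s},\quad V=\frac{n(-s)(n-1)}{n+s},\quad K=(-s)(n-1),\quad \lambda_1=(-s)(n+s-1),\quad \lambda_2=\frac{(-s)(n-1)(n+s)}{n}. \]
   Context: Setting: $\Gamma$ is a primitive strongly regular graph with parameters $(v,k,\lambda,\mu)$ (a $k$-regular graph on $v$ vertices, any two adjacent vertices having $\lambda$ and any two distinct non-adjacent vertices having $\mu$ common neighbours; primitive means $\Gamma$ and its complement are connected), with spectrum $k^1, r^f, s^g$ where $k>r>s$ and exponents are multiplicities. $C$ is a coclique in $\Gamma$ of size $c=\frac{vs}{s-k}$. A $K$-regular graph on $V$ vertices, neither complete nor edgeless, is a divisible design graph with parameters $(V,K,\lambda_1,\lambda_2;m,n)$ if its vertex set can be partitioned into $m$ canonical classes of size $n$ such that two distinct vertices in the same class have exactly $\lambda_1$ common neighbours and two vertices in different classes have exactly $\lambda_2$ common neighbours; it is proper unless $m=1$, $n=1$ or $\lambda_1=\lambda_2$. It is assumed that the subgraph $\Delta$ induced on $V(\Gamma)\setminus C$ is a proper divisible design graph with parameters $(V,K,\lambda_1,\lambda_2;m,n)$. *)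

theory Defs
  imports "HOL-Analysis.Analysis" "HOL-Library.Disjoint_Sets"
begin

text \<open>A finite simple graph is given by a finite vertex set X and a symmetric,
irreflexive adjacency relation E (only its restriction to X matters).\<close>

definition simple_graph :: "'a set \<Rightarrow> ('a \<Rightarrow> 'a \<Rightarrow> bool) \<Rightarrow> bool" where
  "simple_graph X E \<longleftrightarrow> finite X \<and> (\<forall>x\<in>X. \<forall>y\<in>X. E x y \<longleftrightarrow> E y x) \<and> (\<forall>x\<in>X. \<not> E x x)"

definition nbrs :: "'a set \<Rightarrow> ('a \<Rightarrow> 'a \<Rightarrow> bool) \<Rightarrow> 'a \<Rightarrow> 'a set" where
  "nbrs X E x = {y\<in>X. E x y}"

definition common_nbrs :: "'a set \<Rightarrow> ('a \<Rightarrow> 'a \<Rightarrow> bool) \<Rightarrow> 'a \<Rightarrow> 'a \<Rightarrow> nat" where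
  "common_nbrs X E x y = card (nbrs X E x \<inter> nbrs X E y)"

definition regular_graph :: "'a set \<Rightarrow> ('a \<Rightarrow> 'a \<Rightarrow> bool) \<Rightarrow> nat \<Rightarrow> bool" where
  "regular_graph X E k \<longleftrightarrow> simple_graph X E \<and> (\<forall>x\<in>X. card (nbrs X E x) = k)"

definition srg :: "'a set \<Rightarrow> ('a \<Rightarrow> 'a \<Rightarrow> bool) \<Rightarrow> nat \<Rightarrow> nat \<Rightarrow> nat \<Rightarrow> nat \<Rightarrow> bool" where
  "srg X E v k lam mu \<longleftrightarrow> regular_graph X E k \<and> card X = v \<and>
     (\<forall>x\<in>X. \<forall>y\<in>X. x \<noteq> y \<longrightarrow> E x y \<longrightarrow> common_nbrs X E x y = lam) \<and>
     (\<forall>x\<in>X. \<forall>y\<in>X. x \<noteq> y \<longrightarrow> \<not> E x y \<longrightarrow> common_nbrs X E x y = mu)"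

definition graph_connected :: "'a set \<Rightarrow> ('a \<Rightarrow> 'a \<Rightarrow> bool) \<Rightarrow> bool" where
  "graph_connected X E \<longleftrightarrow>
     (\<forall>x\<in>X. \<forall>y\<in>X. (\<lambda>a b. a \<in> X \<and> b \<in> X \<and> E a b)\<^sup>*\<^sup>* x y)"

definition complement_graph :: "('a \<Rightarrow> 'a \<Rightarrow> bool) \<Rightarrow> 'a \<Rightarrow> 'a \<Rightarrow> bool" where
  "complement_graph E x y \<longleftrightarrow> x \<noteq> y \<and> \<not> E x y"

definition primitive_srg :: "'a set \<Rightarrow> ('a \<Rightarrow> 'a \<Rightarrow> bool) \<Rightarrow> nat \<Rightarrow> nat \<Rightarrow> nat \<Rightarrow> nat \<Rightarrow> bool" where
  "primitive_srg X E v k lam mu \<longleftrightarrow> srg X E v k lam mu \<and>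
     graph_connected X E \<and> graph_connected X (complement_graph E)"

text \<open>Eigenvalues of the adjacency matrix (rows/columns indexed by X).
  Vectors are functions X \<rightarrow> real, extended by 0 outside X.\<close>
definition adj_eigenvalue :: "'a set \<Rightarrow> ('a \<Rightarrow> 'a \<Rightarrow> bool) \<Rightarrow> real \<Rightarrow> bool" where
  "adj_eigenvalue X E \<theta> \<longleftrightarrow> (\<exists>u :: 'a \<Rightarrow> real. (\<exists>x\<in>X. u x \<noteq> 0) \<and>
     (\<forall>x\<in>X. (\<Sum>y\<in>X. if E x y then u y else 0) = \<theta> * u x))"

definition adj_spectrum :: "'a set \<Rightarrow> ('a \<Rightarrow> 'a \<Rightarrow> bool) \<Rightarrow> real set" where
  "adj_spectrum X E = {\<theta>. adj_eigenvalue X E \<theta>}"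

definition coclique :: "'a set \<Rightarrow> ('a \<Rightarrow> 'a \<Rightarrow> bool) \<Rightarrow> 'a set \<Rightarrow> bool" where
  "coclique X E C \<longleftrightarrow> C \<subseteq> X \<and> (\<forall>x\<in>C. \<forall>y\<in>C. \<not> E x y)"

definition ddg_with_partition ::
  "'a set \<Rightarrow> ('a \<Rightarrow> 'a \<Rightarrow> bool) \<Rightarrow> 'a set set \<Rightarrow> nat \<Rightarrow> nat \<Rightarrow> nat \<Rightarrow> nat \<Rightarrow> nat \<Rightarrow> nat \<Rightarrow> bool" where
  "ddg_with_partition X E P V K lam1 lam2 m n \<longleftrightarrow>
     regular_graph X E K \<and> card X = V \<and>
     (\<exists>x\<in>X. \<exists>y\<in>X. x \<noteq> y \<and> \<not> E x y) \<and>
     (\<exists>x\<in>X. \<exists>y\<in>X. E x y) \<and>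
     partition_on X P \<and> card P = m \<and> (\<forall>B\<in>P. card B = n) \<and>
     (\<forall>B\<in>P. \<forall>x\<in>B. \<forall>y\<in>B. x \<noteq> y \<longrightarrow> common_nbrs X E x y = lam1) \<and>
     (\<forall>B\<in>P. \<forall>B'\<in>P. B \<noteq> B' \<longrightarrow> (\<forall>x\<in>B. \<forall>y\<in>B'. common_nbrs X E x y = lam2))"

definition ddg :: "'a set \<Rightarrow> ('a \<Rightarrow> 'a \<Rightarrow> bool) \<Rightarrow> nat \<Rightarrow> nat \<Rightarrow> nat \<Rightarrow> nat \<Rightarrow> nat \<Rightarrow> nat \<Rightarrow> bool" where
  "ddg X E V K lam1 lam2 m n \<longleftrightarrow> (\<exists>P. ddg_with_partition X E P V K lam1 lam2 m n)"

definition proper_ddg :: "'a set \<Rightarrow> ('a \<Rightarrow> 'a \<Rightarrow> bool) \<Rightarrow> nat \<Rightarrow> nat \<Rightarrow> nat \<Rightarrow> nat \<Rightarrow> nat \<Rightarrow> nat \<Rightarrow> bool" where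
  "proper_ddg X E V K lam1 lam2 m n \<longleftrightarrow> ddg X E V K lam1 lam2 m n \<and>
     m \<noteq> 1 \<and> n \<noteq> 1 \<and> lam1 \<noteq> lam2"

end

theory Submission
  imports Defs
begin

text \<open>
  Put \<open>a = -s = r\<close>. The eigenvalue equation \<open>\<theta>\<^sup>2 = (lam - mu) \<theta> + (k - mu)\<close> holds for both
  \<open>a\<close> and \<open>-a\<close>, which forces \<open>lam = mu\<close> and \<open>mu = k - a\<^sup>2\<close>. A coclique \<open>C\<close> attaining the
  Hoffman bound is tight: counting edges and paths of length two between \<open>C\<close> and its complement
  shows that the number of neighbours in \<open>C\<close> of an outside vertex has variance zero, so it is
  always \<open>a\<close>. Hence the complement of \<open>C\<close> is \<open>(k - a)\<close>-regular, and, because \<open>lam = mu\<close>, two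
  outside vertices have \<open>mu\<close> minus their number of common outside neighbours as common neighbours
  in \<open>C\<close>; for a divisible design graph this only depends on whether they lie in the same class.
  Counting pairs of outside vertices with a common neighbour in \<open>C\<close>, and the squares of these
  counts, in two ways gives polynomial equations that determine all parameters.
\<close>

lemma real_card_Collect_eq_sum_of_bool:
  "finite A \<Longrightarrow> real (card {x\<in>A. P x}) = (\<Sum>x\<in>A. of_bool (P x))"
  by (simp add: Collect_conj_eq Int_commute)

lemma real_common_nbrs_eq_sum:
  "finite S \<Longrightarrow> real (common_nbrs S E x y) = (\<Sum>w\<in>S. of_bool (E x w) * of_bool (E y w))"
  unfolding common_nbrs_def nbrs_def of_bool_conj[symmetric]
  by (simp add: Collect_conj_eq Int_ac)

lemma common_nbrs_self: "common_nbrs S E x x = card (nbrs S E x)"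
  by (simp add: common_nbrs_def)

lemma common_nbrs_Un_disjoint:
  assumes "finite S" "finite T" "S \<inter> T = {}"
  shows "common_nbrs (S \<union> T) E x y = common_nbrs S E x y + common_nbrs T E x y"
proof -
  have split: "nbrs (S \<union> T) E x \<inter> nbrs (S \<union> T) E y
      = (nbrs S E x \<inter> nbrs S E y) \<union> (nbrs T E x \<inter> nbrs T E y)"
    by (auto simp: nbrs_def)
  have card_split: "card ((nbrs S E x \<inter> nbrs S E y) \<union> (nbrs T E x \<inter> nbrs T E y))
      = card (nbrs S E x \<inter> nbrs S E y) + card (nbrs T E x \<inter> nbrs T E y)"
    using assms by (intro card_Un_disjoint) (auto simp: nbrs_def)
  show ?thesis
    unfolding common_nbrs_def by (simp only: split card_split)
qed

lemma sum_if_mem: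
  fixes p q :: real
  assumes "finite Y" "B \<subseteq> Y"
  shows "(\<Sum>y\<in>Y. if y \<in> B then p else q) = p * card B + q * (real (card Y) - card B)"
proof -
  have "(\<Sum>y\<in>Y. if y \<in> B then p else q)
      = (\<Sum>y\<in>Y - B. if y \<in> B then p else q) + (\<Sum>y\<in>B. if y \<in> B then p else q)"
    by (rule sum.subset_diff[OF assms(2,1)])
  also have "\<dots> = (\<Sum>y\<in>Y - B. q) + (\<Sum>y\<in>B. p)"
    by (intro arg_cong2[where f = "(+)"] sum.cong) auto
  finally have "(\<Sum>y\<in>Y. if y \<in> B then p else q) = (\<Sum>y\<in>Y - B. q) + (\<Sum>y\<in>B. p)" .
  moreover have "real (card (Y - B)) = real (card Y) - card B"
    using assms by (simp add: card_Diff_subset finite_subset card_mono of_nat_diff)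
  ultimately show ?thesis
    by simp
qed

lemma sum_squares_of_sums:
  fixes f :: "'a \<Rightarrow> 'b \<Rightarrow> real"
  shows "(\<Sum>x\<in>Y. (\<Sum>z\<in>C. f x z)\<^sup>2) = (\<Sum>z\<in>C. \<Sum>z'\<in>C. \<Sum>x\<in>Y. f x z * f x z')"
proof -
  have "(\<Sum>x\<in>Y. (\<Sum>z\<in>C. f x z)\<^sup>2) = (\<Sum>x\<in>Y. \<Sum>z\<in>C. \<Sum>z'\<in>C. f x z * f x z')"
    by (simp only: power2_eq_square sum_product)
  also have "\<dots> = (\<Sum>z\<in>C. \<Sum>x\<in>Y. \<Sum>z'\<in>C. f x z * f x z')"
    by (rule sum.swap)
  also have "\<dots> = (\<Sum>z\<in>C. \<Sum>z'\<in>C. \<Sum>x\<in>Y. f x z * f x z')"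
    by (intro sum.cong refl, rule sum.swap)
  finally show ?thesis .
qed

lemma sum_card_nbrs_swap:
  assumes "finite Y" "finite C"
  shows "(\<Sum>x\<in>Y. real (card (nbrs C E x))) = (\<Sum>z\<in>C. real (card {x\<in>Y. E x z}))"
  using assms unfolding nbrs_def
  by (simp only: real_card_Collect_eq_sum_of_bool) (rule sum.swap)

lemma sum_square_card_nbrs:
  assumes "finite Y" "finite C"
  shows "(\<Sum>x\<in>Y. (real (card (nbrs C E x)))\<^sup>2)
       = (\<Sum>z\<in>C. \<Sum>z'\<in>C. real (card {x\<in>Y. E x z \<and> E x z'}))"
  using assms unfolding nbrs_def
  by (simp only: real_card_Collect_eq_sum_of_bool sum_squares_of_sums of_bool_conj)

lemma sum_common_nbrs:
  assumes "finite Y" "finite C"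
  shows "(\<Sum>x\<in>Y. \<Sum>y\<in>Y. real (common_nbrs C E x y)) = (\<Sum>z\<in>C. (real (card {x\<in>Y. E x z}))\<^sup>2)"
  using assms
  by (simp only: real_common_nbrs_eq_sum real_card_Collect_eq_sum_of_bool sum_squares_of_sums)

lemma sum_square_inner_products_swap:
  fixes f :: "'a \<Rightarrow> 'b \<Rightarrow> real"
  shows "(\<Sum>x\<in>Y. \<Sum>y\<in>Y. (\<Sum>z\<in>C. f x z * f y z)\<^sup>2)
       = (\<Sum>z\<in>C. \<Sum>z'\<in>C. (\<Sum>x\<in>Y. f x z * f x z')\<^sup>2)"
proof -
  have "(\<Sum>z\<in>C. \<Sum>z'\<in>C. (\<Sum>x\<in>Y. f x z * f x z')\<^sup>2)
      = (\<Sum>z\<in>C. \<Sum>z'\<in>C. \<Sum>x\<in>Y. \<Sum>y\<in>Y. f x z * f x z' * (f y z * f y z'))"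
    by (simp add: power2_eq_square sum_product)
  also have "\<dots> = (\<Sum>z\<in>C. \<Sum>x\<in>Y. \<Sum>z'\<in>C. \<Sum>y\<in>Y. f x z * f x z' * (f y z * f y z'))"
    by (rule sum.cong[OF refl], rule sum.swap)
  also have "\<dots> = (\<Sum>x\<in>Y. \<Sum>z\<in>C. \<Sum>z'\<in>C. \<Sum>y\<in>Y. f x z * f x z' * (f y z * f y z'))"
    by (rule sum.swap)
  also have "\<dots> = (\<Sum>x\<in>Y. \<Sum>z\<in>C. \<Sum>y\<in>Y. \<Sum>z'\<in>C. f x z * f x z' * (f y z * f y z'))"
    by (intro sum.cong refl, rule sum.swap)
  also have "\<dots> = (\<Sum>x\<in>Y. \<Sum>y\<in>Y. \<Sum>z\<in>C. \<Sum>z'\<in>C. f x z * f x z' * (f y z * f y z'))"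
    by (intro sum.cong refl, rule sum.swap)
  also have "\<dots> = (\<Sum>x\<in>Y. \<Sum>y\<in>Y. (\<Sum>z\<in>C. f x z * f y z)\<^sup>2)"
    by (simp add: power2_eq_square sum_product mult_ac)
  finally show ?thesis
    by (rule sym)
qed

lemma sum_square_common_nbrs:
  assumes "finite Y" "finite C"
  shows "(\<Sum>x\<in>Y. \<Sum>y\<in>Y. (real (common_nbrs C E x y))\<^sup>2)
       = (\<Sum>z\<in>C. \<Sum>z'\<in>C. (real (card {x\<in>Y. E x z \<and> E x z'}))\<^sup>2)"
proof -
  have "(\<Sum>x\<in>Y. \<Sum>y\<in>Y. (real (common_nbrs C E x y))\<^sup>2)
      = (\<Sum>x\<in>Y. \<Sum>y\<in>Y. (\<Sum>z\<in>C. of_bool (E x z) * of_bool (E y z))\<^sup>2)"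
    using assms by (simp only: real_common_nbrs_eq_sum)
  also have "\<dots> = (\<Sum>z\<in>C. \<Sum>z'\<in>C. (\<Sum>x\<in>Y. of_bool (E x z) * of_bool (E x z'))\<^sup>2)"
    by (rule sum_square_inner_products_swap)
  also have "\<dots> = (\<Sum>z\<in>C. \<Sum>z'\<in>C. (real (card {x\<in>Y. E x z \<and> E x z'}))\<^sup>2)"
    using assms by (simp only: real_card_Collect_eq_sum_of_bool of_bool_conj)
  finally show ?thesis .
qed

lemma srg_simple_graph: "srg X E v k lam mu \<Longrightarrow> simple_graph X E"
  by (simp add: srg_def regular_graph_def)

lemma srg_finite: "srg X E v k lam mu \<Longrightarrow> finite X"
  by (simp add: srg_def regular_graph_def simple_graph_def)

lemma srg_card_nbrs: "srg X E v k lam mu \<Longrightarrow> x \<in> X \<Longrightarrow> card (nbrs X E x) = k"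
  by (simp add: srg_def regular_graph_def)

lemma srg_common_nbrs:
  assumes "srg X E v k lam mu" "x \<in> X" "y \<in> X"
  shows "common_nbrs X E x y = (if x = y then k else if E x y then lam else mu)"
  using assms by (auto simp: srg_def regular_graph_def common_nbrs_self)

lemma sum_common_nbrs_weighted:
  fixes u :: "'a \<Rightarrow> real"
  assumes "simple_graph X E"
  shows "(\<Sum>w\<in>X. real (common_nbrs X E x w) * u w)
       = (\<Sum>y\<in>X. of_bool (E x y) * (\<Sum>w\<in>X. of_bool (E y w) * u w))"
proof -
  have fin: "finite X" and sym: "\<And>y w. y \<in> X \<Longrightarrow> w \<in> X \<Longrightarrow> E w y = E y w"
    using assms by (auto simp: simple_graph_def)
  have common: "real (common_nbrs X E x w) = (\<Sum>y\<in>X. of_bool (E x y) * of_bool (E y w))"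
    if w: "w \<in> X" for w
  proof -
    have "(\<Sum>y\<in>X. of_bool (E x y) * of_bool (E w y)) = (\<Sum>y\<in>X. of_bool (E x y) * of_bool (E y w) :: real)"
      using sym[OF _ w] by (intro sum.cong) auto
    then show ?thesis by (simp only: real_common_nbrs_eq_sum[OF fin])
  qed
  have "(\<Sum>w\<in>X. real (common_nbrs X E x w) * u w)
      = (\<Sum>w\<in>X. \<Sum>y\<in>X. of_bool (E x y) * of_bool (E y w) * u w)"
    by (simp only: common sum_distrib_right cong: sum.cong)
  also have "\<dots> = (\<Sum>y\<in>X. of_bool (E x y) * (\<Sum>w\<in>X. of_bool (E y w) * u w))"
    by (subst sum.swap) (simp only: sum_distrib_left mult.assoc)
  finally show ?thesis .
qed

lemma srg_sum_common_nbrs_weighted: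
  fixes u :: "'a \<Rightarrow> real"
  assumes srg: "srg X E v k lam mu" and x: "x \<in> X"
  shows "(\<Sum>w\<in>X. real (common_nbrs X E x w) * u w)
       = (real k - mu) * u x + (real lam - mu) * (\<Sum>w\<in>X. of_bool (E x w) * u w) + mu * sum u X"
proof -
  have fin: "finite X" and irrefl: "\<not> E x x"
    using srg_simple_graph[OF srg] x by (auto simp: simple_graph_def)
  have per_vertex: "real (common_nbrs X E x w)
      = mu + (real lam - mu) * of_bool (E x w) + (real k - mu) * of_bool (w = x)"
    if "w \<in> X" for w
    using srg_common_nbrs[OF srg x that] irrefl by (cases "w = x") auto
  have "(\<Sum>w\<in>X. real (common_nbrs X E x w) * u w)
      = (\<Sum>w\<in>X. mu * u w + (real lam - mu) * (of_bool (E x w) * u w) + (real k - mu) * (of_bool (w = x) * u w))"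
    by (intro sum.cong refl) (simp add: per_vertex algebra_simps)
  also have "\<dots> = mu * sum u X + (real lam - mu) * (\<Sum>w\<in>X. of_bool (E x w) * u w)
      + (real k - mu) * (\<Sum>w\<in>X. of_bool (w = x) * u w)"
    by (simp only: sum.distrib sum_distrib_left)
  also have "(\<Sum>w\<in>X. of_bool (w = x) * u w) = u x"
    using fin x by simp
  finally show ?thesis by simp
qed

lemma srg_degree_sum:
  assumes "srg X E v k lam mu" "y \<in> X"
  shows "(\<Sum>w\<in>X. of_bool (E y w)) = real k" "(\<Sum>w\<in>X. of_bool (E w y)) = real k"
proof -
  have fin: "finite X" and sym: "\<And>w. w \<in> X \<Longrightarrow> E w y = E y w"
    using srg_simple_graph[OF assms(1)] assms(2) by (auto simp: simple_graph_def)
  show "(\<Sum>w\<in>X. of_bool (E y w)) = real k"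
    using srg_card_nbrs[OF assms] real_card_Collect_eq_sum_of_bool[OF fin, of "E y"]
    by (simp add: nbrs_def)
  then show "(\<Sum>w\<in>X. of_bool (E w y)) = real k"
    using sym by (simp cong: sum.cong)
qed

lemma srg_eigenvalue_equation:
  assumes srg: "srg X E v k lam mu" and eig: "adj_eigenvalue X E \<theta>" and "\<theta> \<noteq> real k"
  shows "\<theta>\<^sup>2 = (real lam - mu) * \<theta> + (real k - mu)"
proof -
  obtain u x where x: "x \<in> X" "u x \<noteq> 0"
    and ev_if: "\<forall>y\<in>X. (\<Sum>w\<in>X. if E y w then u w else 0) = \<theta> * u y"
    using eig unfolding adj_eigenvalue_def by blast
  have ev: "(\<Sum>w\<in>X. of_bool (E y w) * u w) = \<theta> * u y" if "y \<in> X" for y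
  proof -
    have "(\<Sum>w\<in>X. of_bool (E y w) * u w) = (\<Sum>w\<in>X. if E y w then u w else 0)"
      by (intro sum.cong) auto
    with ev_if that show ?thesis by simp
  qed
  have "\<theta> * sum u X = (\<Sum>y\<in>X. \<Sum>w\<in>X. of_bool (E y w) * u w)"
    by (simp add: ev sum_distrib_left)
  also have "\<dots> = (\<Sum>w\<in>X. (\<Sum>y\<in>X. of_bool (E y w)) * u w)"
    by (subst sum.swap) (simp only: sum_distrib_right)
  also have "\<dots> = real k * sum u X"
    using srg_degree_sum(2)[OF srg] by (simp add: sum_distrib_left)
  finally have "sum u X = 0"
    using assms(3) by simp
  then have "(\<Sum>w\<in>X. real (common_nbrs X E x w) * u w) = ((real k - mu) + (real lam - mu) * \<theta>) * u x"
    using srg_sum_common_nbrs_weighted[OF srg x(1), of u] ev[OF x(1)] by (simp add: algebra_simps)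
  moreover have "(\<Sum>w\<in>X. real (common_nbrs X E x w) * u w) = \<theta>\<^sup>2 * u x"
    using sum_common_nbrs_weighted[OF srg_simple_graph[OF srg]] ev ev[OF x(1)]
    by (simp add: sum_distrib_left[symmetric] power2_eq_square mult_ac cong: sum.cong)
  ultimately show ?thesis
    using x(2) by simp
qed

lemma srg_parameter_relation:
  assumes srg: "srg X E v k lam mu" and "X \<noteq> {}"
  shows "real k * (real k - lam - 1) = mu * (real v - k - 1)"
proof -
  obtain x where x: "x \<in> X"
    using assms(2) by blast
  have "(\<Sum>w\<in>X. real (common_nbrs X E x w) * 1) = real k * real k"
    using sum_common_nbrs_weighted[OF srg_simple_graph[OF srg], of x "\<lambda>_. 1"]
      srg_degree_sum(1)[OF srg] x
    by (simp add: sum_distrib_right[symmetric] cong: sum.cong)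
  moreover have "card X = v"
    using srg by (simp add: srg_def)
  ultimately show ?thesis
    using srg_sum_common_nbrs_weighted[OF srg x, of "\<lambda>_. 1"] srg_degree_sum(1)[OF srg x]
    by (simp add: algebra_simps)
qed

lemma srg_coclique_common_nbrs_outside:
  assumes srg: "srg X E v k lam mu" and C: "coclique X E C" and "z \<in> C" "z' \<in> C"
  shows "card {x\<in>X - C. E x z \<and> E x z'} = (if z = z' then k else mu)"
proof -
  have CX: "C \<subseteq> X" and indep: "\<And>x y. x \<in> C \<Longrightarrow> y \<in> C \<Longrightarrow> \<not> E x y"
    using C by (auto simp: coclique_def)
  have sym: "\<And>x y. x \<in> X \<Longrightarrow> y \<in> X \<Longrightarrow> E x y = E y x"
    using srg_simple_graph[OF srg] by (auto simp: simple_graph_def)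
  have zX: "z \<in> X" "z' \<in> X"
    using assms CX by auto
  have "{x\<in>X - C. E x z \<and> E x z'} = nbrs X E z \<inter> nbrs X E z'"
    using assms CX indep sym unfolding nbrs_def by blast
  then show ?thesis
    using srg_common_nbrs[OF srg zX] indep assms unfolding common_nbrs_def by auto
qed

lemma sum_if_eq:
  fixes p q :: real
  assumes "finite C" "z \<in> C"
  shows "(\<Sum>z'\<in>C. if z = z' then p else q) = p + q * (real (card C) - 1)"
  using sum_if_mem[of C "{z}" p q] assms by (simp add: eq_commute)

lemma srg_coclique_outside_counts:
  assumes srg: "srg X E v k lam mu" and C: "coclique X E C"
  defines "c \<equiv> real (card C)"
  shows "(\<Sum>x\<in>X - C. real (card (nbrs C E x))) = c * k"
    and "(\<Sum>x\<in>X - C. (real (card (nbrs C E x)))\<^sup>2) = c * (k + (c - 1) * mu)"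
    and "(\<Sum>x\<in>X - C. \<Sum>y\<in>X - C. real (common_nbrs C E x y)) = c * (real k)\<^sup>2"
    and "(\<Sum>x\<in>X - C. \<Sum>y\<in>X - C. (real (common_nbrs C E x y))\<^sup>2)
       = c * ((real k)\<^sup>2 + (c - 1) * (real mu)\<^sup>2)"
proof -
  have finX: "finite X"
    using srg_finite[OF srg] .
  have finC: "finite C"
    using C finX by (auto simp: coclique_def intro: finite_subset)
  define Y where "Y = X - C"
  have finY: "finite Y"
    using finX by (simp add: Y_def)
  have pair: "real (card {x\<in>Y. E x z \<and> E x z'}) = (if z = z' then real k else mu)"
    if "z \<in> C" "z' \<in> C" for z z'
    using srg_coclique_common_nbrs_outside[OF srg C that] by (simp add: Y_def)
  show "(\<Sum>x\<in>X - C. real (card (nbrs C E x))) = c * k"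
    using sum_card_nbrs_swap[OF finY finC, of E] pair[of z z for z]
    by (simp add: c_def Y_def[symmetric] cong: sum.cong)
  show "(\<Sum>x\<in>X - C. \<Sum>y\<in>X - C. real (common_nbrs C E x y)) = c * (real k)\<^sup>2"
    using sum_common_nbrs[OF finY finC, of E] pair[of z z for z]
    by (simp add: c_def Y_def[symmetric] cong: sum.cong)
  have "(\<Sum>x\<in>Y. (real (card (nbrs C E x)))\<^sup>2) = (\<Sum>z\<in>C. \<Sum>z'\<in>C. if z = z' then real k else mu)"
    unfolding sum_square_card_nbrs[OF finY finC] by (intro sum.cong refl) (simp add: pair)
  also have "\<dots> = c * (k + (c - 1) * mu)"
    using finC by (simp add: sum_if_eq c_def)
  finally show "(\<Sum>x\<in>X - C. (real (card (nbrs C E x)))\<^sup>2) = c * (k + (c - 1) * mu)"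
    by (simp only: Y_def)
  have "(\<Sum>x\<in>Y. \<Sum>y\<in>Y. (real (common_nbrs C E x y))\<^sup>2)
      = (\<Sum>z\<in>C. \<Sum>z'\<in>C. if z = z' then (real k)\<^sup>2 else (real mu)\<^sup>2)"
    unfolding sum_square_common_nbrs[OF finY finC] by (intro sum.cong refl) (simp add: pair)
  also have "\<dots> = c * ((real k)\<^sup>2 + (c - 1) * (real mu)\<^sup>2)"
    using finC by (simp add: sum_if_eq c_def)
  finally show "(\<Sum>x\<in>X - C. \<Sum>y\<in>X - C. (real (common_nbrs C E x y))\<^sup>2)
      = c * ((real k)\<^sup>2 + (c - 1) * (real mu)\<^sup>2)"
    by (simp only: Y_def)
qed

lemma hoffman_coclique_algebra:
  fixes s k v c lam mu :: real
  assumes eig: "s\<^sup>2 = (lam - mu) * s + (k - mu)"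
    and param: "k * (k - lam - 1) = mu * (v - k - 1)"
    and size: "c * (s - k) = v * s" and "s \<noteq> k"
  shows "(c - 1) * mu = - k * (s + 1)"
proof -
  have "(s - k) * ((c - 1) * mu + k * (s + 1))
      = k * (s\<^sup>2 - (lam - mu) * s - (k - mu)) + mu * (c * (s - k) - v * s)
        + s * (mu * (v - k - 1) - k * (k - lam - 1))"
    by (simp add: algebra_simps power2_eq_square)
  also have "\<dots> = 0"
    using assms by simp
  finally have "(c - 1) * mu + k * (s + 1) = 0"
    using \<open>s \<noteq> k\<close> by simp
  then show ?thesis
    by linarith
qed

lemma srg_coclique_hoffman_regular:
  assumes srg: "srg X E v k lam mu" and eig: "adj_eigenvalue X E s" "s < 0"
    and C: "coclique X E C" and size: "real (card C) = real v * s / (s - real k)"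
  shows "\<forall>x\<in>X - C. real (card (nbrs C E x)) = - s"
proof (cases "X - C = {}")
  case False
  define c where "c = real (card C)"
  define d where "d x = real (card (nbrs C E x))" for x
  have finX: "finite X"
    using srg_finite[OF srg] .
  have "s \<noteq> real k"
    using \<open>s < 0\<close> by simp
  have size': "c * (s - real k) = real v * s"
    using size \<open>s < 0\<close> by (simp add: c_def field_simps)
  have hoff: "(c - 1) * mu = - real k * (s + 1)"
    using hoffman_coclique_algebra[OF srg_eigenvalue_equation[OF srg eig(1) \<open>s \<noteq> real k\<close>]
        srg_parameter_relation[OF srg] size' \<open>s \<noteq> real k\<close>] False
    by blast
  have "card (X - C) = card X - card C" "card C \<le> card X" "card X = v"
    using C finX srg by (auto simp: coclique_def srg_def intro: card_Diff_subset finite_subset card_mono)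
  then have card_outside: "real (card (X - C)) = real v - c"
    by (simp add: c_def of_nat_diff)
  have "(\<Sum>x\<in>X - C. (d x + s)\<^sup>2)
      = (\<Sum>x\<in>X - C. (d x)\<^sup>2) + 2 * s * (\<Sum>x\<in>X - C. d x) + real (card (X - C)) * s\<^sup>2"
    by (simp add: power2_sum sum.distrib sum_distrib_left mult_ac)
  also have "\<dots> = c * (k + (c - 1) * mu) + 2 * s * (c * k) + (real v - c) * s\<^sup>2"
    using srg_coclique_outside_counts(1,2)[OF srg C] card_outside by (simp add: d_def c_def)
  also have "\<dots> = c * k + c * (- real k * (s + 1)) + 2 * s * (c * k) + (real v - c) * s\<^sup>2"
    by (simp only: distrib_left hoff)
  also have "\<dots> = - s * (c * (s - real k) - real v * s)"
    by (simp add: algebra_simps power2_eq_square)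
  also have "\<dots> = 0"
    by (simp add: size')
  finally show ?thesis
    using finX by (simp add: sum_nonneg_eq_0_iff add_eq_0_iff d_def)
qed blast

lemma common_nbrs_Diff_add:
  assumes "finite X" "C \<subseteq> X"
  shows "common_nbrs (X - C) E x y + common_nbrs C E x y = common_nbrs X E x y"
proof -
  have "(X - C) \<union> C = X" "(X - C) \<inter> C = {}"
    using assms(2) by auto
  then show ?thesis
    using common_nbrs_Un_disjoint[of "X - C" C E x y] assms by (simp add: finite_subset)
qed

lemma coclique_complement_common_nbrs_block:
  assumes srg: "srg X E v k mu mu" and CX: "C \<subseteq> X"
    and reg: "\<forall>x\<in>X - C. real (card (nbrs C E x)) = a"
    and ddg: "ddg_with_partition (X - C) E P V K lam1 lam2 m n"
    and lam1: "real lam1 = real mu - a"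
    and B: "B \<in> P" "x \<in> B" and y: "y \<in> X - C"
  shows "real (common_nbrs C E x y) = (if y \<in> B then a else real mu - lam2)"
proof -
  have part: "partition_on (X - C) P"
    and within: "\<And>x y. x \<in> B \<Longrightarrow> y \<in> B \<Longrightarrow> x \<noteq> y \<Longrightarrow> common_nbrs (X - C) E x y = lam1"
    and across: "\<And>B' x y. B' \<in> P \<Longrightarrow> B \<noteq> B' \<Longrightarrow> x \<in> B \<Longrightarrow> y \<in> B' \<Longrightarrow>
      common_nbrs (X - C) E x y = lam2"
    using ddg B(1) unfolding ddg_with_partition_def by blast+
  have x: "x \<in> X - C"
    using part B by (auto simp: partition_on_def)
  have finX: "finite X"
    using srg_finite[OF srg] .
  have outside: "real (common_nbrs C E x y) = real mu - common_nbrs (X - C) E x y" if "x \<noteq> y"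
    using common_nbrs_Diff_add[OF finX CX, of E x y] srg_common_nbrs[OF srg, of x y] x y that
    by (simp split: if_splits)
  show ?thesis
  proof (cases "y \<in> B")
    case True
    show ?thesis
    proof (cases "x = y")
      case True
      then show ?thesis
        using reg x \<open>y \<in> B\<close> by (simp add: common_nbrs_self)
    next
      case False
      then show ?thesis
        using outside[OF False] within[OF B(2) \<open>y \<in> B\<close> False] lam1 \<open>y \<in> B\<close> by simp
    qed
  next
    case False
    obtain B' where B': "B' \<in> P" "y \<in> B'"
      using part y by (auto simp: partition_on_def)
    have "B \<noteq> B'" "x \<noteq> y"
      using B(2) B'(2) False by auto
    then show ?thesis
      using outside across[OF B'(1) _ B(2) B'(2)] False by simp
  qed
qed

lemma sum_partition_blocks:
  fixes H :: "'a \<Rightarrow> 'a \<Rightarrow> real"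
  assumes "finite Y" "partition_on Y P" "\<forall>B\<in>P. card B = n"
    and H: "\<And>B x y. B \<in> P \<Longrightarrow> x \<in> B \<Longrightarrow> y \<in> Y \<Longrightarrow> H x y = (if y \<in> B then p else q)"
  shows "(\<Sum>x\<in>Y. \<Sum>y\<in>Y. H x y) = card Y * (p * n + q * (real (card Y) - n))"
proof -
  have "(\<Sum>y\<in>Y. H x y) = p * n + q * (real (card Y) - n)" if "x \<in> Y" for x
  proof -
    obtain B where B: "B \<in> P" "x \<in> B"
      using assms(2) \<open>x \<in> Y\<close> by (auto simp: partition_on_def)
    then have "B \<subseteq> Y" "card B = n"
      using assms(2,3) by (auto simp: partition_on_def)
    then show ?thesis
      using sum_if_mem[OF assms(1), of B p q] H[OF B] by (simp cong: sum.cong)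
  qed
  then show ?thesis
    by simp
qed

lemma card_partition_on:
  assumes "finite Y" "partition_on Y P" "\<forall>B\<in>P. card B = n"
  shows "card Y = n * card P"
proof -
  have "\<Union>P = Y" "disjoint P"
    using assms(2) by (auto simp: partition_on_def)
  then show ?thesis
    using card_partition[of P n] finite_elements[OF assms(1,2)] assms(1,3)
    by (simp add: disjoint_def)
qed

lemma srg_opposite_eigenvalues:
  assumes srg: "srg X E v k lam mu" and "a > 0" "a \<noteq> real k"
    and "adj_eigenvalue X E a" "adj_eigenvalue X E (- a)"
  shows "lam = mu" and "real mu = real k - a\<^sup>2"
proof -
  have "- a \<noteq> real k"
    using \<open>a > 0\<close> by (metis neg_less_0_iff_less not_less of_nat_0_le_iff)
  have plus: "a\<^sup>2 = (real lam - mu) * a + (real k - mu)"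
    using srg_eigenvalue_equation[OF srg assms(4,3)] .
  have minus: "(- a)\<^sup>2 = (real lam - mu) * (- a) + (real k - mu)"
    using srg_eigenvalue_equation[OF srg assms(5) \<open>- a \<noteq> real k\<close>] .
  have "2 * ((real lam - mu) * a) = ((real lam - mu) * a + (real k - mu)) - ((real lam - mu) * (- a) + (real k - mu))"
    by (simp add: algebra_simps)
  also have "\<dots> = 0"
    by (simp only: plus[symmetric] minus[symmetric]) simp
  finally show "lam = mu"
    using \<open>a > 0\<close> by simp
  with plus show "real mu = real k - a\<^sup>2"
    by simp
qed

lemma coclique_count_equations_reduce:
  fixes a k c mu V t n :: real
  assumes "a > 0" "V \<noteq> 0" and mu: "mu = k - a\<^sup>2"
    and deg: "c * k = V * a" and deg_sq: "c * (k + (c - 1) * mu) = V * a\<^sup>2"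
    and row: "V * (a * n + t * (V - n)) = c * k\<^sup>2"
    and row_sq: "V * (a\<^sup>2 * n + t\<^sup>2 * (V - n)) = c * (k\<^sup>2 + (c - 1) * mu\<^sup>2)"
  shows "a * n + t * (V - n) = a * k"
    and "a\<^sup>2 * n + t\<^sup>2 * (V - n) = a * (k + (a - 1) * mu)"
    and "(V - k) * mu = a * k * (a - 1)"
proof -
  have pairs: "c * ((c - 1) * mu) = V * (a * (a - 1))"
    using deg deg_sq by (simp add: algebra_simps power2_eq_square)
  have "V * (a * n + t * (V - n)) = V * (a * k)"
    using row deg by (simp add: power2_eq_square algebra_simps)
  then show "a * n + t * (V - n) = a * k"
    using \<open>V \<noteq> 0\<close> by simp
  have "c * (k\<^sup>2 + (c - 1) * mu\<^sup>2) = (c * k) * k + (c * ((c - 1) * mu)) * mu"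
    by (simp add: algebra_simps power2_eq_square)
  also have "\<dots> = V * (a * (k + (a - 1) * mu))"
    by (simp only: deg pairs) (simp add: algebra_simps)
  finally show "a\<^sup>2 * n + t\<^sup>2 * (V - n) = a * (k + (a - 1) * mu)"
    using row_sq \<open>V \<noteq> 0\<close> by simp
  have "V * a * ((c - 1) * mu) = (c * ((c - 1) * mu)) * k"
    by (simp only: deg[symmetric]) (simp add: algebra_simps)
  also have "\<dots> = V * a * (k * (a - 1))"
    by (simp only: pairs) (simp add: algebra_simps)
  finally have "(c - 1) * mu = k * (a - 1)"
    using \<open>V \<noteq> 0\<close> \<open>a > 0\<close> by simp
  moreover have "a * ((V - k) * mu) - a * (a * k * (a - 1))
      = mu * (V * a - c * k) + k * ((c - 1) * mu - k * (a - 1)) + k * (a - 1) * (k - a\<^sup>2 - mu)"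
    by (simp add: algebra_simps power2_eq_square)
  ultimately have "a * ((V - k) * mu) = a * (a * k * (a - 1))"
    using deg mu by simp
  then show "(V - k) * mu = a * k * (a - 1)"
    using \<open>a > 0\<close> by simp
qed

lemma block_count_equations_degree:
  fixes a k mu n V t :: real
  assumes "a > 0" "V \<noteq> n" "t \<noteq> a" and mu: "mu = k - a\<^sup>2"
    and row: "a * n + t * (V - n) = a * k"
    and row_sq: "a\<^sup>2 * n + t\<^sup>2 * (V - n) = a * (k + (a - 1) * mu)"
    and deg: "(V - k) * mu = a * k * (a - 1)"
  shows "k = n * a" and "(V - k) * (n - a) = n * a * (a - 1)"
proof -
  define D where "D = V - n"
  define R where "R = V - k"
  have tD: "t * D = a * (k - n)" and t2D: "t\<^sup>2 * D = a * (k + (a - 1) * mu) - a\<^sup>2 * n"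
    using row row_sq by (simp_all add: D_def algebra_simps)
  have e1: "a * R = D * (a - t)"
    using tD by (simp add: D_def R_def algebra_simps)
  have "D * (a - t)\<^sup>2 = a\<^sup>2 * D - 2 * a * (t * D) + t\<^sup>2 * D"
    by (simp add: power2_eq_square algebra_simps)
  also have "\<dots> = a\<^sup>2 * (R - a\<^sup>2 + a)"
    by (simp only: tD t2D) (simp add: mu D_def R_def power2_eq_square algebra_simps)
  finally have e2: "D * (a - t)\<^sup>2 = a\<^sup>2 * (R - a\<^sup>2 + a)" .
  have "a\<^sup>2 * R\<^sup>2 = D * (D * (a - t)\<^sup>2)"
    using e1 by (metis power2_eq_square power_mult_distrib mult.assoc mult.commute)
  then have "a\<^sup>2 * R\<^sup>2 = a\<^sup>2 * (D * (R - a\<^sup>2 + a))"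
    by (simp add: e2 algebra_simps)
  then have e4: "R\<^sup>2 = D * (R - a\<^sup>2 + a)"
    using \<open>a > 0\<close> by simp
  have e5: "R * (n - a) = n * a * (a - 1)"
    using e4 deg unfolding mu by (simp add: D_def R_def algebra_simps power2_eq_square)
  have "R \<noteq> 0"
    using e1 \<open>V \<noteq> n\<close> \<open>t \<noteq> a\<close> \<open>a > 0\<close> by (auto simp: D_def)
  moreover have "R * (k * (n - a)) = R * (n * mu)"
  proof -
    have "R * (k * (n - a)) = k * (R * (n - a))"
      by (simp add: algebra_simps)
    also have "\<dots> = n * (a * k * (a - 1))"
      by (simp only: e5) (simp add: algebra_simps)
    also have "\<dots> = R * (n * mu)"
      by (simp only: deg[folded R_def, symmetric]) (simp add: algebra_simps)
    finally show ?thesis .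
  qed
  ultimately have "k * (n - a) = n * mu"
    by simp
  then have "a * k = a * (n * a)"
    by (auto simp: mu algebra_simps power2_eq_square)
  then show "k = n * a"
    using \<open>a > 0\<close> by simp
  show "(V - k) * (n - a) = n * a * (a - 1)"
    using e5 by (simp add: R_def)
qed

lemma block_count_equations_parameters:
  fixes a n m V t :: real
  assumes "a > 0" "n \<noteq> 0" "n \<noteq> 1" "m \<noteq> 1" and V: "V = n * m"
    and row: "a * n + t * (V - n) = a * (n * a)"
    and deg: "(V - n * a) * (n - a) = n * a * (a - 1)"
  shows "m = a * (n - 1) / (n - a)" and "t = a * (n - a) / n"
proof -
  have "n * ((m - a) * (n - a)) = n * (a * (a - 1))"
    using deg by (simp add: V algebra_simps)
  then have ma: "(m - a) * (n - a) = a * (a - 1)"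
    using \<open>n \<noteq> 0\<close> by simp
  have "n \<noteq> a"
    using ma \<open>a > 0\<close> \<open>n \<noteq> 1\<close> by auto
  then show m: "m = a * (n - 1) / (n - a)"
    using ma by (simp add: field_simps)
  have "a \<noteq> 1"
    using m \<open>m \<noteq> 1\<close> \<open>n \<noteq> 1\<close> by auto
  have "n * ((m - 1) * t) = n * (a * (a - 1))"
    using row by (simp add: V algebra_simps)
  then have "(m - 1) * t = a * (a - 1)"
    using \<open>n \<noteq> 0\<close> by simp
  moreover have "m - 1 = n * (a - 1) / (n - a)"
    using m \<open>n \<noteq> a\<close> by (simp add: field_simps)
  ultimately have "(a - 1) * (n * t) = (a - 1) * (a * (n - a))"
    using \<open>n \<noteq> a\<close> by (simp add: field_simps)
  then have "n * t = a * (n - a)"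
    using \<open>a \<noteq> 1\<close> by simp
  then show "t = a * (n - a) / n"
    using \<open>n \<noteq> 0\<close> by (simp add: field_simps)
qed

lemma regular_coclique_complement_ddg_equations:
  assumes srg: "srg X E v k mu mu" and C: "coclique X E C"
    and reg: "\<forall>x\<in>X - C. real (card (nbrs C E x)) = a"
    and ddg: "ddg_with_partition (X - C) E P V K lam1 lam2 m n"
    and lam1: "real lam1 = real K - a\<^sup>2" and mu: "real mu = real k - a\<^sup>2" and "a > 0"
  defines "t \<equiv> real mu - real lam2"
  shows "real K = real k - a" and "V = n * m" and "V > 0"
    and "a * n + t * (real V - n) = a * k"
    and "a\<^sup>2 * n + t\<^sup>2 * (real V - n) = a * (k + (a - 1) * mu)"
    and "(real V - k) * mu = a * k * (a - 1)"
proof -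
  define c where "c = real (card C)"
  have finX: "finite X" and CX: "C \<subseteq> X"
    using srg_simple_graph[OF srg] C by (auto simp: simple_graph_def coclique_def)
  have finY: "finite (X - C)"
    using finX by simp
  have regY: "regular_graph (X - C) E K" and V: "card (X - C) = V"
    and edge: "\<exists>x\<in>X - C. \<exists>y\<in>X - C. E x y"
    and part: "partition_on (X - C) P" and m: "card P = m" and n: "\<forall>B\<in>P. card B = n"
    using ddg by (simp_all add: ddg_with_partition_def)
  obtain x where x: "x \<in> X - C"
    using edge by blast
  have "card (nbrs (X - C) E x) + card (nbrs C E x) = card (nbrs X E x)"
    using common_nbrs_Diff_add[OF finX CX, of E x x] by (simp add: common_nbrs_self)
  then show K: "real K = real k - a"
    using regY x reg srg_card_nbrs[OF srg, of x] by (auto simp: regular_graph_def)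
  show "V = n * m"
    using card_partition_on[OF finY part n] V m by simp
  show "V > 0"
    using x finY V card_gt_0_iff by blast
  have deg: "c * k = V * a" and deg_sq: "c * (k + (c - 1) * mu) = V * a\<^sup>2"
    using srg_coclique_outside_counts(1,2)[OF srg C] reg V by (simp_all add: c_def)
  have H: "real (common_nbrs C E x y) = (if y \<in> B then a else t)"
    if "B \<in> P" "x \<in> B" "y \<in> X - C" for B x y
    using coclique_complement_common_nbrs_block[OF srg CX reg ddg _ that] lam1 mu K
    by (simp add: t_def power2_eq_square)
  have row: "V * (a * n + t * (real V - n)) = c * (real k)\<^sup>2"
    using sum_partition_blocks[OF finY part n H] srg_coclique_outside_counts(3)[OF srg C] V
    by (simp add: c_def)
  have "(real (common_nbrs C E x y))\<^sup>2 = (if y \<in> B then a\<^sup>2 else t\<^sup>2)"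
    if "B \<in> P" "x \<in> B" "y \<in> X - C" for B x y
    using H[OF that] by simp
  then have row_sq: "V * (a\<^sup>2 * n + t\<^sup>2 * (real V - n)) = c * ((real k)\<^sup>2 + (c - 1) * (real mu)\<^sup>2)"
    using sum_partition_blocks[OF finY part n] srg_coclique_outside_counts(4)[OF srg C] V
    by (simp add: c_def)
  have "real V \<noteq> 0"
    using \<open>V > 0\<close> by simp
  then show "a * n + t * (real V - n) = a * k"
    and "a\<^sup>2 * n + t\<^sup>2 * (real V - n) = a * (k + (a - 1) * mu)"
    and "(real V - k) * mu = a * k * (a - 1)"
    using coclique_count_equations_reduce[OF \<open>a > 0\<close> _ mu deg deg_sq row row_sq] by simp_all
qed

theorem mainTheorem9:
  fixes X :: "'a set" and E :: "'a \<Rightarrow> 'a \<Rightarrow> bool" and C :: "'a set"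
    and v k lam mu :: nat and r s :: real
    and V K lam1 lam2 m n :: nat
  assumes prim: "primitive_srg X E v k lam mu"
    and spec: "adj_spectrum X E = {real k, r, s}"
    and ord: "real k > r" "r > s"
    and cocl: "coclique X E C"
    and csize: "real (card C) = real v * s / (s - real k)"
    and ddg: "proper_ddg (X - C) E V K lam1 lam2 m n"
    and rK: "r = sqrt (real K - real lam1)"
    and sK: "s = - sqrt (real K - real lam1)"
  shows "real m = (-s) * (real n - 1) / (real n + s)
    \<and> real V = real n * (-s) * (real n - 1) / (real n + s)
    \<and> real K = (-s) * (real n - 1)
    \<and> real lam1 = (-s) * (real n + s - 1)
    \<and> real lam2 = (-s) * (real n - 1) * (real n + s) / real n"
proof -
  have srg: "srg X E v k lam mu"
    using prim by (simp add: primitive_srg_def)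
  define a where "a = - s"
  have "a > 0" "r = a" and lam1: "real lam1 = real K - a\<^sup>2"
    using ord rK sK by (auto simp: a_def)
  have eig: "adj_eigenvalue X E a" "adj_eigenvalue X E s"
    using spec \<open>r = a\<close> unfolding adj_spectrum_def by blast+
  then have "lam = mu" and mu: "real mu = real k - a\<^sup>2"
    using srg_opposite_eigenvalues[OF srg \<open>a > 0\<close>] ord \<open>r = a\<close> by (auto simp: a_def)
  have reg: "\<forall>x\<in>X - C. real (card (nbrs C E x)) = a"
    using srg_coclique_hoffman_regular[OF srg eig(2) _ cocl csize] \<open>a > 0\<close> by (simp add: a_def)
  obtain P where P: "ddg_with_partition (X - C) E P V K lam1 lam2 m n"
    and "m \<noteq> 1" "n \<noteq> 1" "lam1 \<noteq> lam2"
    using ddg by (auto simp: proper_ddg_def ddg_def)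
  define t where "t = real mu - real lam2"
  note eqs = regular_coclique_complement_ddg_equations[OF srg[unfolded \<open>lam = mu\<close>] cocl reg P lam1 mu
      \<open>a > 0\<close>, folded t_def]
  have "t \<noteq> a" "real V \<noteq> real n" "real n \<noteq> 0"
    using eqs(1-3) lam1 mu \<open>lam1 \<noteq> lam2\<close> \<open>m \<noteq> 1\<close> by (auto simp: t_def)
  have k: "real k = n * a" and blocks: "(real V - k) * (n - a) = n * a * (a - 1)"
    using block_count_equations_degree[OF \<open>a > 0\<close> \<open>real V \<noteq> real n\<close> \<open>t \<noteq> a\<close> mu eqs(4-6)] .
  have "real n \<noteq> 1" "real m \<noteq> 1" "real V = real n * real m"
    using \<open>n \<noteq> 1\<close> \<open>m \<noteq> 1\<close> eqs(2) by simp_all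
  then have "real m = a * (real n - 1) / (real n - a)" "t = a * (real n - a) / real n"
    using block_count_equations_parameters[OF \<open>a > 0\<close> \<open>real n \<noteq> 0\<close>]
      eqs(4)[unfolded k] blocks[unfolded k] by blast+
  then show ?thesis
    using eqs(1,2) k lam1 mu \<open>real n \<noteq> 0\<close>
    by (simp add: a_def t_def field_simps power2_eq_square)
qed

end
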